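(* Let $K$ be a context, $N$ an embedded net, $\sigma_0$ a marking of state conditions, and suppose $K[N]$ is a non-interfering substitution from $\sigma_0$. Then every complete sequence $\pi$ of $K[N]$ from $(I(K[N]),\sigma_0)$ (i.e. a sequence of events from $(I(K[N]),\sigma_0)$ to $(T(K[N]),\sigma')$ for some $\sigma'$) is of the form $\Pi_0\cdot(\Pi_1\cdot\Pi_0)^*$, where: (a) $\Pi_0$ ranges over sequences consisting of $K$-events all of whose markings (including the first and last) are $K$-markings; (b) $\Pi_1$ ranges over nonempty sequences of events (of either kind) all of whose markings are $N$-markings, in which no $K$-event has a pre- or postcondition in $P_i\cup P_t$, such that if $(C_N\cup C_K,\sigma)$ and $(C_N'\cup C_K',\sigma')$ are the initial and final markings of the sequence then $C_N=P_i$ and $C_N'=P_t$, and whose first and last events are both $N$-events.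
   Context: Petri nets: an event $e$ has preconditions ${}^\bullet e$ and postconditions $e^\bullet$; events are identified with their pair $({}^\bullet e,e^\bullet)$. $e$ has concession in marking $M$ if ${}^\bullet e\subseteq M$ and $(M\setminus{}^\bullet e)\cap e^\bullet=\emptyset$; then $M\xrightarrow{e}M'=(M\setminus{}^\bullet e)\cup e^\bullet$. $e_1 I e_2$ (independence) iff $({}^\bullet e_1\cup e_1^\bullet)\cap({}^\bullet e_2\cup e_2^\bullet)=\emptyset$. A sequence $e_1\dots e_n$ from $M$ goes through markings $M=M_0\xrightarrow{e_1}M_1\cdots\xrightarrow{e_n}M_n$; these $M_j$ are its markings. A sequence $\pi$ from $M$ is of form $\Pi\cdot\Pi'$ if $\pi=\pi_1\cdot\pi_2$ (concatenation) with $\pi_1$ of form $\Pi$ from $M$ and $\pi_2$ of form $\Pi'$ from the marking reached by $\pi_1$; it is of form $\Pi^*$ if it is a finite concatenation (possibly empty) of sequences of form $\Pi$ in this sense. Conditions: a set $\mathcal C$ of control conditions with distinguished elements $\iota,\tau$ closed under injective constructors $1{:}c$, $2{:}c$, $(c,c')$ with disjoint images; a disjoint set $\mathcal S$ of state conditions. Markings are written $(C,\sigma)$, $C\subseteq\mathcal C,\sigma\subseteq\mathcal S$; ${}^Ce={}^\bullet e\cap\mathcal C$, $e^C=e^\bullet\cap\mathcal C$. An embedded net $N$: events $\mathrm{Ev}(N)$ over conditions $\mathcal C\cup\mathcal S$ and sets $I(N),T(N)\subseteq\mathcal C$. Control firing $C\xrightarrow{e}_{\mathcal C}C'$: ${}^Ce\subseteq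 C$, $(C\setminus{}^Ce)\cap e^C=\emptyset$, $C'=(C\setminus{}^Ce)\cup e^C$; control-reachability via events of the net. Standing assumption: all embedded nets satisfy $I(N),T(N)\neq\emptyset$; ${}^Ce,e^C\neq\emptyset$ for all events; $I(N)\cap T(N)=\emptyset$; ${}^Ce\cap T(N)=\emptyset$; and for all $C$ control-reachable from $I(N)$: $C\subseteq I(N)$ or $I(N)\subseteq C$ implies $C=I(N)$, and $C\subseteq T(N)$ or $T(N)\subseteq C$ implies $C=T(N)$. Tagging $1{:}C$, $1{:}e$ (tag control conditions only), similarly $2$. Gluing for $P\subseteq\mathcal C\times\mathcal C$: $P\triangleleft C=\{(c_1,c_2)\mid c_1\in C,(c_1,c_2)\in P\}\cup\{c_1\in C\mid\nexists c_2.(c_1,c_2)\in P\}$, $P\triangleright C=\{(c_1,c_2)\mid c_2\in C,(c_1,c_2)\in P\}\cup\{c_2\in C\mid\nexists c_1.(c_1,c_2)\in P\}$, applied to events on control conditions only. A context $K$ is an embedded net with a distinguished event $[-]$ whose pre/postconditions are control conditions, forming disjoint nonempty sets. $P_i=1{:}{}^\bullet[-]\times 2{:}I(N)$, $P_t=1{:}[-]^\bullet\times 2{:}T(N)$, $P=P_i\cup P_t$. $K[N]$ has events $P\triangleleft1{:}(\mathrm{Ev}(K)\setminus\{[-]\})\cup P\triangleright 2{:}\mathrm{Ev}(N)$, $I(K[N])=P\triangleleft1{:}I(K)$, $T(K[N])=P\triangleleft 1{:}T(K)$. $N$-events: $P\triangleright 2{:}e$, $e\in\mathrm{Ev}(N)$;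 $K$-events: $P\triangleleft1{:}e$, $e\in\mathrm{Ev}(K)\setminus\{[-]\}$. Standing assumption: no event of $K[N]$ is both a $K$-event and an $N$-event. A $K$-condition is $1{:}c_1$ with $c_1\in\mathcal C\setminus({}^\bullet[-]\cup[-]^\bullet)$; an $N$-internal condition is $2{:}c_2$ with $c_2\notin I(N)\cup T(N)$; an $N$-condition is an element of $P_i\cup P_t$ or an $N$-internal condition. A marking is written $(C_N\cup C_K,\sigma)$ with $C_N$ its $N$-conditions and $C_K$ its $K$-conditions. It is an $N$-marking if for all $a,a'\in{}^\bullet[-]$, $x,x'\in[-]^\bullet$, $i\in I(N)$, $t\in T(N)$: $(1{:}a,2{:}i)\in C_N\Rightarrow(1{:}a',2{:}i)\in C_N$ and $(1{:}x,2{:}t)\in C_N\Rightarrow(1{:}x',2{:}t)\in C_N$. It is a $K$-marking if it contains no $N$-internal condition and for all $a\in{}^\bullet[-]$, $x\in[-]^\bullet$, $i,i'\in I(N)$, $t,t'\in T(N)$: $(1{:}a,2{:}i)\in C_N\Rightarrow(1{:}a,2{:}i')\in C_N$ and $(1{:}x,2{:}t)\in C_N\Rightarrow(1{:}x,2{:}t')\in C_N$. A condition is internal to $N$ if it is $2{:}c_2$ with $c_2$ a pre- or postcondition of an event of $N$ not in $I(N)\cup T(N)$; $N$ is active in $M$ if $P_i\subseteq M$ or $M$ contains a condition internal to $N$. $K[N]$ is a non-interfering substitution from $\sigma_0$ if for every $M$ reachable from $(I(K[N]),\sigma_0)$: (1) $P_i\subseteq M$ implies $P_t\cap M=\emptyset$;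 (2) if $N$ is active in $M$, no $K$-event enabled in $M$ has a pre- or postcondition in $P_i\cup P_t$; (3) if $M\xrightarrow{e_1}M_1\xrightarrow{e_2}M'$, one of $e_1,e_2$ an $N$-event and the other a $K$-event, and $N$ active in $M$ and $M_1$, then $e_1Ie_2$. *)

theory Defs
  imports Main
begin

text \<open>Control conditions: a free algebra over atoms (which include the distinguished
  iota and tau) closed under the injective constructors 1:c, 2:c and (c,c') with
  disjoint images.\<close>
datatype 'a ctrl = Iota | Tau | Atom 'a | Tag1 "'a ctrl" | Tag2 "'a ctrl"
  | Glue "'a ctrl" "'a ctrl"

text \<open>Conditions are control conditions (Inl) or state conditions (Inr).\<close>
type_synonym ('a,'s) cond = "'a ctrl + 's"
type_synonym ('a,'s) marking = "('a,'s) cond set"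
text \<open>An event is identified with the pair (preconditions, postconditions).\<close>
type_synonym ('a,'s) event = "('a,'s) cond set \<times> ('a,'s) cond set"

definition ctl :: "('a,'s) cond set \<Rightarrow> 'a ctrl set" where
  "ctl X = {c. Inl c \<in> X}"
definition st :: "('a,'s) cond set \<Rightarrow> 's set" where
  "st X = {s. Inr s \<in> X}"
definition mk :: "'a ctrl set \<Rightarrow> 's set \<Rightarrow> ('a,'s) marking" where
  "mk C \<sigma> = Inl ` C \<union> Inr ` \<sigma>"

definition pre :: "('a,'s) event \<Rightarrow> ('a,'s) cond set" where "pre e = fst e"
definition post :: "('a,'s) event \<Rightarrow> ('a,'s) cond set" where "post e = snd e"

definition concession :: "('a,'s) event \<Rightarrow> ('a,'s) marking \<Rightarrow> bool" where
  "concession e M \<longleftrightarrow> pre e \<subseteq> M \<and> (M - pre e) \<inter> post e = {}"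

definition fire :: "('a,'s) event \<Rightarrow> ('a,'s) marking \<Rightarrow> ('a,'s) marking" where
  "fire e M = (M - pre e) \<union> post e"

definition indep :: "('a,'s) event \<Rightarrow> ('a,'s) event \<Rightarrow> bool" where
  "indep e1 e2 \<longleftrightarrow> (pre e1 \<union> post e1) \<inter> (pre e2 \<union> post e2) = {}"

fun valid_seq :: "('a,'s) event set \<Rightarrow> ('a,'s) marking \<Rightarrow> ('a,'s) event list \<Rightarrow> bool" where
  "valid_seq E M [] = True"
| "valid_seq E M (e # es) = (e \<in> E \<and> concession e M \<and> valid_seq E (fire e M) es)"

fun markings :: "('a,'s) marking \<Rightarrow> ('a,'s) event list \<Rightarrow> ('a,'s) marking list" where
  "markings M [] = [M]"
| "markings M (e # es) = M # markings (fire e M) es"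

definition end_marking :: "('a,'s) marking \<Rightarrow> ('a,'s) event list \<Rightarrow> ('a,'s) marking" where
  "end_marking M es = last (markings M es)"

definition reachable :: "('a,'s) event set \<Rightarrow> ('a,'s) marking \<Rightarrow> ('a,'s) marking \<Rightarrow> bool" where
  "reachable E M0 M \<longleftrightarrow> (\<exists>es. valid_seq E M0 es \<and> end_marking M0 es = M)"

record ('a,'s) enet =
  Ev :: "('a,'s) event set"
  Ini :: "'a ctrl set"
  Ter :: "'a ctrl set"

definition ctrl_fire :: "'a ctrl set \<Rightarrow> ('a,'s) event \<Rightarrow> 'a ctrl set \<Rightarrow> bool" where
  "ctrl_fire C e C' \<longleftrightarrow> ctl (pre e) \<subseteq> C \<and> (C - ctl (pre e)) \<inter> ctl (post e) = {}
     \<and> C' = (C - ctl (pre e)) \<union> ctl (post e)"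

inductive_set ctrl_reach :: "('a,'s) enet \<Rightarrow> 'a ctrl set set" for N where
  init: "Ini N \<in> ctrl_reach N"
| step: "C \<in> ctrl_reach N \<Longrightarrow> e \<in> Ev N \<Longrightarrow> ctrl_fire C e C' \<Longrightarrow> C' \<in> ctrl_reach N"

definition wf_enet :: "('a,'s) enet \<Rightarrow> bool" where
  "wf_enet N \<longleftrightarrow> Ini N \<noteq> {} \<and> Ter N \<noteq> {}
     \<and> (\<forall>e\<in>Ev N. ctl (pre e) \<noteq> {} \<and> ctl (post e) \<noteq> {})
     \<and> Ini N \<inter> Ter N = {}
     \<and> (\<forall>e\<in>Ev N. ctl (pre e) \<inter> Ter N = {})
     \<and> (\<forall>C\<in>ctrl_reach N.
          ((C \<subseteq> Ini N \<or> Ini N \<subseteq> C) \<longrightarrow> C = Ini N)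
        \<and> ((C \<subseteq> Ter N \<or> Ter N \<subseteq> C) \<longrightarrow> C = Ter N))"

definition map_ctl :: "('a ctrl set \<Rightarrow> 'a ctrl set) \<Rightarrow> ('a,'s) event \<Rightarrow> ('a,'s) event" where
  "map_ctl f e = (mk (f (ctl (pre e))) (st (pre e)), mk (f (ctl (post e))) (st (post e)))"

definition glueL :: "('a ctrl \<times> 'a ctrl) set \<Rightarrow> 'a ctrl set \<Rightarrow> 'a ctrl set" where
  "glueL P C = {Glue c1 c2 | c1 c2. c1 \<in> C \<and> (c1, c2) \<in> P}
     \<union> {c1 \<in> C. \<nexists>c2. (c1, c2) \<in> P}"

definition glueR :: "('a ctrl \<times> 'a ctrl) set \<Rightarrow> 'a ctrl set \<Rightarrow> 'a ctrl set" where
  "glueR P C = {Glue c1 c2 | c1 c2. c2 \<in> C \<and> (c1, c2) \<in> P}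
     \<union> {c2 \<in> C. \<nexists>c1. (c1, c2) \<in> P}"

definition is_context :: "('a,'s) enet \<Rightarrow> ('a,'s) event \<Rightarrow> bool" where
  "is_context K h \<longleftrightarrow> wf_enet K \<and> h \<in> Ev K
     \<and> st (pre h) = {} \<and> st (post h) = {}
     \<and> ctl (pre h) \<noteq> {} \<and> ctl (post h) \<noteq> {}
     \<and> ctl (pre h) \<inter> ctl (post h) = {}"

definition Pi_rel :: "('a,'s) enet \<Rightarrow> ('a,'s) event \<Rightarrow> ('a,'s) enet \<Rightarrow> ('a ctrl \<times> 'a ctrl) set" where
  "Pi_rel K h N = (Tag1 ` ctl (pre h)) \<times> (Tag2 ` Ini N)"
definition Pt_rel :: "('a,'s) enet \<Rightarrow> ('a,'s) event \<Rightarrow> ('a,'s) enet \<Rightarrow> ('a ctrl \<times> 'a ctrl) set" where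
  "Pt_rel K h N = (Tag1 ` ctl (post h)) \<times> (Tag2 ` Ter N)"
definition P_rel :: "('a,'s) enet \<Rightarrow> ('a,'s) event \<Rightarrow> ('a,'s) enet \<Rightarrow> ('a ctrl \<times> 'a ctrl) set" where
  "P_rel K h N = Pi_rel K h N \<union> Pt_rel K h N"

definition PiC :: "('a,'s) enet \<Rightarrow> ('a,'s) event \<Rightarrow> ('a,'s) enet \<Rightarrow> 'a ctrl set" where
  "PiC K h N = (\<lambda>(c1, c2). Glue c1 c2) ` Pi_rel K h N"
definition PtC :: "('a,'s) enet \<Rightarrow> ('a,'s) event \<Rightarrow> ('a,'s) enet \<Rightarrow> 'a ctrl set" where
  "PtC K h N = (\<lambda>(c1, c2). Glue c1 c2) ` Pt_rel K h N"

definition Kev_of :: "('a,'s) enet \<Rightarrow> ('a,'s) event \<Rightarrow> ('a,'s) enet \<Rightarrow> ('a,'s) event \<Rightarrow> ('a,'s) event" where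
  "Kev_of K h N e = map_ctl (\<lambda>C. glueL (P_rel K h N) (Tag1 ` C)) e"
definition Nev_of :: "('a,'s) enet \<Rightarrow> ('a,'s) event \<Rightarrow> ('a,'s) enet \<Rightarrow> ('a,'s) event \<Rightarrow> ('a,'s) event" where
  "Nev_of K h N e = map_ctl (\<lambda>C. glueR (P_rel K h N) (Tag2 ` C)) e"

definition subst :: "('a,'s) enet \<Rightarrow> ('a,'s) event \<Rightarrow> ('a,'s) enet \<Rightarrow> ('a,'s) enet" where
  "subst K h N = \<lparr> Ev = Kev_of K h N ` (Ev K - {h}) \<union> Nev_of K h N ` Ev N,
                   Ini = glueL (P_rel K h N) (Tag1 ` Ini K),
                   Ter = glueL (P_rel K h N) (Tag1 ` Ter K) \<rparr>"

definition is_Kevent :: "('a,'s) enet \<Rightarrow> ('a,'s) event \<Rightarrow> ('a,'s) enet \<Rightarrow> ('a,'s) event \<Rightarrow> bool" where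
  "is_Kevent K h N e \<longleftrightarrow> e \<in> Kev_of K h N ` (Ev K - {h})"
definition is_Nevent :: "('a,'s) enet \<Rightarrow> ('a,'s) event \<Rightarrow> ('a,'s) enet \<Rightarrow> ('a,'s) event \<Rightarrow> bool" where
  "is_Nevent K h N e \<longleftrightarrow> e \<in> Nev_of K h N ` Ev N"

definition events_disjoint :: "('a,'s) enet \<Rightarrow> ('a,'s) event \<Rightarrow> ('a,'s) enet \<Rightarrow> bool" where
  "events_disjoint K h N \<longleftrightarrow>
     (\<forall>e. \<not> (is_Kevent K h N e \<and> is_Nevent K h N e))"

definition is_Kcond :: "('a,'s) enet \<Rightarrow> ('a,'s) event \<Rightarrow> ('a,'s) enet \<Rightarrow> 'a ctrl \<Rightarrow> bool" where
  "is_Kcond K h N c \<longleftrightarrow> (\<exists>c1. c = Tag1 c1 \<and> c1 \<notin> ctl (pre h) \<union> ctl (post h))"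
definition is_Ninternal_cond :: "('a,'s) enet \<Rightarrow> ('a,'s) event \<Rightarrow> ('a,'s) enet \<Rightarrow> 'a ctrl \<Rightarrow> bool" where
  "is_Ninternal_cond K h N c \<longleftrightarrow> (\<exists>c2. c = Tag2 c2 \<and> c2 \<notin> Ini N \<union> Ter N)"
definition is_Ncond :: "('a,'s) enet \<Rightarrow> ('a,'s) event \<Rightarrow> ('a,'s) enet \<Rightarrow> 'a ctrl \<Rightarrow> bool" where
  "is_Ncond K h N c \<longleftrightarrow> c \<in> PiC K h N \<union> PtC K h N \<or> is_Ninternal_cond K h N c"

definition CN :: "('a,'s) enet \<Rightarrow> ('a,'s) event \<Rightarrow> ('a,'s) enet \<Rightarrow> ('a,'s) marking \<Rightarrow> 'a ctrl set" where
  "CN K h N M = {c \<in> ctl M. is_Ncond K h N c}"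
definition CK :: "('a,'s) enet \<Rightarrow> ('a,'s) event \<Rightarrow> ('a,'s) enet \<Rightarrow> ('a,'s) marking \<Rightarrow> 'a ctrl set" where
  "CK K h N M = {c \<in> ctl M. is_Kcond K h N c}"

definition is_Nmarking :: "('a,'s) enet \<Rightarrow> ('a,'s) event \<Rightarrow> ('a,'s) enet \<Rightarrow> ('a,'s) marking \<Rightarrow> bool" where
  "is_Nmarking K h N M \<longleftrightarrow>
     (\<forall>a\<in>ctl (pre h). \<forall>a'\<in>ctl (pre h). \<forall>i\<in>Ini N.
        Glue (Tag1 a) (Tag2 i) \<in> CN K h N M \<longrightarrow> Glue (Tag1 a') (Tag2 i) \<in> CN K h N M)
   \<and> (\<forall>x\<in>ctl (post h). \<forall>x'\<in>ctl (post h). \<forall>t\<in>Ter N.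
        Glue (Tag1 x) (Tag2 t) \<in> CN K h N M \<longrightarrow> Glue (Tag1 x') (Tag2 t) \<in> CN K h N M)"

definition is_Kmarking :: "('a,'s) enet \<Rightarrow> ('a,'s) event \<Rightarrow> ('a,'s) enet \<Rightarrow> ('a,'s) marking \<Rightarrow> bool" where
  "is_Kmarking K h N M \<longleftrightarrow>
     (\<forall>c\<in>ctl M. \<not> is_Ninternal_cond K h N c)
   \<and> (\<forall>a\<in>ctl (pre h). \<forall>i\<in>Ini N. \<forall>i'\<in>Ini N.
        Glue (Tag1 a) (Tag2 i) \<in> CN K h N M \<longrightarrow> Glue (Tag1 a) (Tag2 i') \<in> CN K h N M)
   \<and> (\<forall>x\<in>ctl (post h). \<forall>t\<in>Ter N. \<forall>t'\<in>Ter N.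
        Glue (Tag1 x) (Tag2 t) \<in> CN K h N M \<longrightarrow> Glue (Tag1 x) (Tag2 t') \<in> CN K h N M)"

definition internal_to_N :: "('a,'s) enet \<Rightarrow> 'a ctrl \<Rightarrow> bool" where
  "internal_to_N N c \<longleftrightarrow> (\<exists>c2 e. c = Tag2 c2 \<and> e \<in> Ev N
       \<and> c2 \<in> ctl (pre e) \<union> ctl (post e) \<and> c2 \<notin> Ini N \<union> Ter N)"

definition N_active :: "('a,'s) enet \<Rightarrow> ('a,'s) event \<Rightarrow> ('a,'s) enet \<Rightarrow> ('a,'s) marking \<Rightarrow> bool" where
  "N_active K h N M \<longleftrightarrow> PiC K h N \<subseteq> ctl M \<or> (\<exists>c\<in>ctl M. internal_to_N N c)"

definition touches :: "('a,'s) event \<Rightarrow> 'a ctrl set \<Rightarrow> bool" where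
  "touches e X \<longleftrightarrow> (ctl (pre e) \<union> ctl (post e)) \<inter> X \<noteq> {}"

definition non_interfering :: "('a,'s) enet \<Rightarrow> ('a,'s) event \<Rightarrow> ('a,'s) enet \<Rightarrow> 's set \<Rightarrow> bool" where
  "non_interfering K h N \<sigma>0 \<longleftrightarrow>
    (\<forall>M. reachable (Ev (subst K h N)) (mk (Ini (subst K h N)) \<sigma>0) M \<longrightarrow>
       (PiC K h N \<subseteq> ctl M \<longrightarrow> PtC K h N \<inter> ctl M = {})
     \<and> (N_active K h N M \<longrightarrow>
          (\<forall>e. is_Kevent K h N e \<and> concession e M \<longrightarrow>
               \<not> touches e (PiC K h N \<union> PtC K h N)))
     \<and> (\<forall>e1 e2. concession e1 M \<and> concession e2 (fire e1 M)
          \<and> ((is_Nevent K h N e1 \<and> is_Kevent K h N e2) \<or> (is_Kevent K h N e1 \<and> is_Nevent K h N e2))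
          \<and> N_active K h N M \<and> N_active K h N (fire e1 M)
          \<longrightarrow> indep e1 e2))"

definition form0 :: "('a,'s) enet \<Rightarrow> ('a,'s) event \<Rightarrow> ('a,'s) enet \<Rightarrow> ('a,'s) marking \<Rightarrow> ('a,'s) event list \<Rightarrow> bool" where
  "form0 K h N M es \<longleftrightarrow> valid_seq (Ev (subst K h N)) M es
     \<and> (\<forall>e\<in>set es. is_Kevent K h N e)
     \<and> (\<forall>M'\<in>set (markings M es). is_Kmarking K h N M')"

definition form1 :: "('a,'s) enet \<Rightarrow> ('a,'s) event \<Rightarrow> ('a,'s) enet \<Rightarrow> ('a,'s) marking \<Rightarrow> ('a,'s) event list \<Rightarrow> bool" where
  "form1 K h N M es \<longleftrightarrow> valid_seq (Ev (subst K h N)) M es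
     \<and> es \<noteq> []
     \<and> (\<forall>M'\<in>set (markings M es). is_Nmarking K h N M')
     \<and> (\<forall>e\<in>set es. is_Kevent K h N e \<longrightarrow> \<not> touches e (PiC K h N \<union> PtC K h N))
     \<and> CN K h N M = PiC K h N
     \<and> CN K h N (end_marking M es) = PtC K h N
     \<and> is_Nevent K h N (hd es) \<and> is_Nevent K h N (last es)"

text \<open>Form (Pi_1 . Pi_0)^*: a list of consecutive pieces (alpha_j, beta_j).\<close>
fun form_star :: "('a,'s) enet \<Rightarrow> ('a,'s) event \<Rightarrow> ('a,'s) enet \<Rightarrow> ('a,'s) marking
    \<Rightarrow> (('a,'s) event list \<times> ('a,'s) event list) list \<Rightarrow> bool" where
  "form_star K h N M [] = True"
| "form_star K h N M ((a, b) # rest) =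
     (form1 K h N M a \<and> form0 K h N (end_marking M a) b
      \<and> form_star K h N (end_marking M (a @ b)) rest)"

end

theory Submission
  imports Defs
begin

text \<open>Follow the control part of the markings along \<pi>. Outside N the N-conditions of a marking
  are the glued image of a set of hole conditions (a K-phase); inside N they are the glued image of
  a control marking C of N reachable from I(N) (an N-phase). An N-event can occur in a K-phase only
  when all of P_i is marked, which starts an N-phase, and the N-phase ends exactly when C reaches
  T(N). A K-event occurring in an N-phase cannot touch P_i \<union> P_t: by non-interference N would then
  be inactive, so C would lie in I(N) \<union> T(N) without containing I(N); by well-formedness of N, C
  would then meet and miss both I(N) and T(N), whereas a K-event touching a glued condition
  (1:a,2:j) sees either all or none of the conditions glued to a. Cutting \<pi> at the phase
  boundaries yields the decomposition.\<close>

lemma ctl_mk [simp]: "ctl (mk C \<sigma>) = C"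
  by (auto simp: ctl_def mk_def)

lemma ctl_Un [simp]: "ctl (A \<union> B) = ctl A \<union> ctl B"
  and ctl_Diff [simp]: "ctl (A - B) = ctl A - ctl B"
  and ctl_Int [simp]: "ctl (A \<inter> B) = ctl A \<inter> ctl B"
  and ctl_empty [simp]: "ctl {} = {}"
  by (auto simp: ctl_def)

lemma ctl_mono: "A \<subseteq> B \<Longrightarrow> ctl A \<subseteq> ctl B"
  by (auto simp: ctl_def)

lemma pre_map_ctl [simp]: "pre (map_ctl f e) = mk (f (ctl (pre e))) (st (pre e))"
  and post_map_ctl [simp]: "post (map_ctl f e) = mk (f (ctl (post e))) (st (post e))"
  by (simp_all add: map_ctl_def pre_def post_def)

lemma ctl_fire: "ctl (fire e M) = (ctl M - ctl (pre e)) \<union> ctl (post e)"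
  by (simp add: fire_def)

lemma concession_ctl:
  assumes "concession e M"
  shows "ctl (pre e) \<subseteq> ctl M" "(ctl M - ctl (pre e)) \<inter> ctl (post e) = {}"
proof -
  show "ctl (pre e) \<subseteq> ctl M"
    using assms ctl_mono by (auto simp: concession_def)
  have "ctl ((M - pre e) \<inter> post e) = {}"
    using assms by (simp add: concession_def)
  then show "(ctl M - ctl (pre e)) \<inter> ctl (post e) = {}"
    by simp
qed

lemma markings_ne_Nil [simp]: "markings M es \<noteq> []"
  by (cases es) auto

lemma end_marking_Nil [simp]: "end_marking M [] = M"
  and end_marking_Cons [simp]: "end_marking M (e # es) = end_marking (fire e M) es"
  by (simp_all add: end_marking_def)

lemma end_marking_append: "end_marking M (a @ b) = end_marking (end_marking M a) b"
  by (induct a arbitrary: M) auto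

lemma reachable_refl: "reachable E M0 M0"
  unfolding reachable_def by (rule exI[of _ "[]"]) simp

lemma reachable_fire:
  assumes "reachable E M0 M" "e \<in> E" "concession e M"
  shows "reachable E M0 (fire e M)"
proof -
  obtain es where "valid_seq E M0 es" "end_marking M0 es = M"
    using assms(1) by (auto simp: reachable_def)
  moreover have "valid_seq E M0 (es @ [e]) \<longleftrightarrow> valid_seq E M0 es \<and> valid_seq E (end_marking M0 es) [e]"
    by (induct es arbitrary: M0) auto
  ultimately show ?thesis
    using assms(2,3) unfolding reachable_def
    by (intro exI[of _ "es @ [e]"]) (simp add: end_marking_append)
qed

lemma P_rel_iff:
  "(c1, c2) \<in> P_rel K h N \<longleftrightarrow> (\<exists>a i. c1 = Tag1 a \<and> c2 = Tag2 i
     \<and> (a \<in> ctl (pre h) \<and> i \<in> Ini N \<or> a \<in> ctl (post h) \<and> i \<in> Ter N))"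
  unfolding P_rel_def Pi_rel_def Pt_rel_def by auto

lemma glueR_Glue_iff:
  "Glue (Tag1 a) (Tag2 i) \<in> glueR (P_rel K h N) (Tag2 ` C) \<longleftrightarrow>
     i \<in> C \<and> (a \<in> ctl (pre h) \<and> i \<in> Ini N \<or> a \<in> ctl (post h) \<and> i \<in> Ter N)"
  unfolding glueR_def P_rel_iff by auto

lemma glueL_Glue_iff:
  "Glue (Tag1 a) (Tag2 i) \<in> glueL (P_rel K h N) (Tag1 ` C) \<longleftrightarrow>
     a \<in> C \<and> (a \<in> ctl (pre h) \<and> i \<in> Ini N \<or> a \<in> ctl (post h) \<and> i \<in> Ter N)"
  unfolding glueL_def P_rel_iff by auto

lemma glueR_Tag2_iff:
  assumes "ctl (pre h) \<noteq> {}" "ctl (post h) \<noteq> {}"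
  shows "Tag2 c \<in> glueR (P_rel K h N) (Tag2 ` C) \<longleftrightarrow> c \<in> C \<and> c \<notin> Ini N \<and> c \<notin> Ter N"
  using assms unfolding glueR_def P_rel_iff by auto

lemma glueL_Tag1_iff:
  assumes "Ini N \<noteq> {}" "Ter N \<noteq> {}"
  shows "Tag1 c \<in> glueL (P_rel K h N) (Tag1 ` C) \<longleftrightarrow>
    c \<in> C \<and> c \<notin> ctl (pre h) \<and> c \<notin> ctl (post h)"
  using assms unfolding glueL_def P_rel_iff by auto

lemma glueR_cases:
  "x \<in> glueR (P_rel K h N) (Tag2 ` C) \<Longrightarrow> (\<exists>a i. x = Glue (Tag1 a) (Tag2 i)) \<or> (\<exists>c. x = Tag2 c)"
  unfolding glueR_def P_rel_iff by auto

lemma glueL_cases: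
  "x \<in> glueL (P_rel K h N) (Tag1 ` C) \<Longrightarrow> (\<exists>a i. x = Glue (Tag1 a) (Tag2 i)) \<or> (\<exists>c. x = Tag1 c)"
  unfolding glueL_def P_rel_iff by auto

lemma Tag2_notin_glueL [simp]: "Tag2 c \<notin> glueL (P_rel K h N) (Tag1 ` C)"
  using glueL_cases by blast

lemma is_Ncond_Glue_iff:
  "is_Ncond K h N (Glue (Tag1 a) (Tag2 i)) \<longleftrightarrow>
     (a \<in> ctl (pre h) \<and> i \<in> Ini N \<or> a \<in> ctl (post h) \<and> i \<in> Ter N)"
  and is_Ncond_Tag2_iff: "is_Ncond K h N (Tag2 c) \<longleftrightarrow> c \<notin> Ini N \<and> c \<notin> Ter N"
  and not_is_Ncond_Tag1: "\<not> is_Ncond K h N (Tag1 c)"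
  unfolding is_Ncond_def is_Ninternal_cond_def PiC_def PtC_def Pi_rel_def Pt_rel_def by auto

lemma is_Ncond_cases:
  "is_Ncond K h N x \<Longrightarrow> (\<exists>a i. x = Glue (Tag1 a) (Tag2 i)) \<or> (\<exists>c. x = Tag2 c)"
  unfolding is_Ncond_def is_Ninternal_cond_def PiC_def PtC_def Pi_rel_def Pt_rel_def by auto

lemma PiC_iff:
  "x \<in> PiC K h N \<longleftrightarrow> (\<exists>a i. x = Glue (Tag1 a) (Tag2 i) \<and> a \<in> ctl (pre h) \<and> i \<in> Ini N)"
  unfolding PiC_def Pi_rel_def by auto

lemma PtC_iff:
  "x \<in> PtC K h N \<longleftrightarrow> (\<exists>a i. x = Glue (Tag1 a) (Tag2 i) \<and> a \<in> ctl (post h) \<and> i \<in> Ter N)"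
  unfolding PtC_def Pt_rel_def by auto

lemma CN_iff: "x \<in> CN K h N M \<longleftrightarrow> x \<in> ctl M \<and> is_Ncond K h N x"
  by (simp add: CN_def)

lemma CN_fire:
  "CN K h N (fire e M) = (CN K h N M - ctl (pre e)) \<union> {c \<in> ctl (post e). is_Ncond K h N c}"
  by (auto simp: CN_def ctl_fire)

lemma Nev_of_ctl [simp]:
  "ctl (pre (Nev_of K h N e)) = glueR (P_rel K h N) (Tag2 ` ctl (pre e))"
  "ctl (post (Nev_of K h N e)) = glueR (P_rel K h N) (Tag2 ` ctl (post e))"
  by (simp_all add: Nev_of_def)

lemma Kev_of_ctl [simp]:
  "ctl (pre (Kev_of K h N e)) = glueL (P_rel K h N) (Tag1 ` ctl (pre e))"
  "ctl (post (Kev_of K h N e)) = glueL (P_rel K h N) (Tag1 ` ctl (post e))"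
  by (simp_all add: Kev_of_def)

abbreviation concat_pairs :: "('b list \<times> 'b list) list \<Rightarrow> 'b list" where
  "concat_pairs segs \<equiv> concat (map (\<lambda>(a, b). a @ b) segs)"

definition K_decomp :: "('a,'s) enet \<Rightarrow> ('a,'s) event \<Rightarrow> ('a,'s) enet \<Rightarrow> ('a,'s) marking
    \<Rightarrow> ('a,'s) event list \<Rightarrow> bool" where
  "K_decomp K h N M \<pi> \<longleftrightarrow> (\<exists>\<pi>0 segs. \<pi> = \<pi>0 @ concat_pairs segs
     \<and> form0 K h N M \<pi>0 \<and> form_star K h N (end_marking M \<pi>0) segs)"

text \<open>A form-\<Pi>_1 sequence without its conditions on the first marking and the first event.\<close>
definition N_tail :: "('a,'s) enet \<Rightarrow> ('a,'s) event \<Rightarrow> ('a,'s) enet \<Rightarrow> ('a,'s) marking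
    \<Rightarrow> ('a,'s) event list \<Rightarrow> bool" where
  "N_tail K h N M \<alpha> \<longleftrightarrow> valid_seq (Ev (subst K h N)) M \<alpha> \<and> \<alpha> \<noteq> []
     \<and> (\<forall>M'\<in>set (markings M \<alpha>). is_Nmarking K h N M')
     \<and> (\<forall>e\<in>set \<alpha>. is_Kevent K h N e \<longrightarrow> \<not> touches e (PiC K h N \<union> PtC K h N))
     \<and> CN K h N (end_marking M \<alpha>) = PtC K h N \<and> is_Nevent K h N (last \<alpha>)"

definition N_decomp :: "('a,'s) enet \<Rightarrow> ('a,'s) event \<Rightarrow> ('a,'s) enet \<Rightarrow> ('a,'s) marking
    \<Rightarrow> ('a,'s) event list \<Rightarrow> bool" where
  "N_decomp K h N M \<pi> \<longleftrightarrow> (\<exists>\<alpha> \<beta> segs. \<pi> = \<alpha> @ \<beta> @ concat_pairs segs \<and> N_tail K h N M \<alpha>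
     \<and> form0 K h N (end_marking M \<alpha>) \<beta> \<and> form_star K h N (end_marking M (\<alpha> @ \<beta>)) segs)"

lemma K_decomp_Nil: "is_Kmarking K h N M \<Longrightarrow> K_decomp K h N M []"
  unfolding K_decomp_def form0_def by (intro exI[of _ "[]"]) simp

lemma K_decomp_Cons:
  assumes "e \<in> Ev (subst K h N)" "concession e M" "is_Kevent K h N e" "is_Kmarking K h N M"
    and "K_decomp K h N (fire e M) \<pi>"
  shows "K_decomp K h N M (e # \<pi>)"
proof -
  obtain \<pi>0 segs where "\<pi> = \<pi>0 @ concat_pairs segs" "form0 K h N (fire e M) \<pi>0"
      "form_star K h N (end_marking (fire e M) \<pi>0) segs"
    using assms(5) by (auto simp: K_decomp_def)
  then show ?thesis
    using assms(1-4) unfolding K_decomp_def form0_def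
    by (intro exI[of _ "e # \<pi>0"] exI[of _ segs]) auto
qed

lemma K_decomp_if_N_decomp:
  assumes "is_Kmarking K h N M" "CN K h N M = PiC K h N" "is_Nevent K h N (hd \<pi>)"
    and "N_decomp K h N M \<pi>"
  shows "K_decomp K h N M \<pi>"
proof -
  obtain \<alpha> \<beta> segs where \<pi>: "\<pi> = \<alpha> @ \<beta> @ concat_pairs segs" and \<alpha>: "N_tail K h N M \<alpha>"
    and "form0 K h N (end_marking M \<alpha>) \<beta>" "form_star K h N (end_marking M (\<alpha> @ \<beta>)) segs"
    using assms(4) by (auto simp: N_decomp_def)
  moreover have "form1 K h N M \<alpha>"
    using \<alpha> assms(2,3) unfolding \<pi> N_tail_def form1_def by auto
  moreover have "form0 K h N M []"
    using assms(1) by (simp add: form0_def)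
  ultimately show ?thesis
    unfolding K_decomp_def
    by (intro exI[of _ "[] :: ('a,'s) event list"] exI[of _ "(\<alpha>, \<beta>) # segs"]) (simp add: end_marking_append)
qed

lemma N_decomp_Cons:
  assumes "e \<in> Ev (subst K h N)" "concession e M" "is_Nmarking K h N M"
    and "is_Kevent K h N e \<longrightarrow> \<not> touches e (PiC K h N \<union> PtC K h N)"
    and "N_decomp K h N (fire e M) \<pi>"
  shows "N_decomp K h N M (e # \<pi>)"
proof -
  obtain \<alpha> \<beta> segs where "\<pi> = \<alpha> @ \<beta> @ concat_pairs segs" "N_tail K h N (fire e M) \<alpha>"
      "form0 K h N (end_marking (fire e M) \<alpha>) \<beta>"
      "form_star K h N (end_marking (fire e M) (\<alpha> @ \<beta>)) segs"
    using assms(5) by (auto simp: N_decomp_def)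
  then show ?thesis
    using assms(1-4) unfolding N_decomp_def N_tail_def
    by (intro exI[of _ "e # \<alpha>"] exI[of _ \<beta>] exI[of _ segs]) auto
qed

lemma N_decomp_Cons_last:
  assumes "e \<in> Ev (subst K h N)" "concession e M" "is_Nevent K h N e" "\<not> is_Kevent K h N e"
    and "is_Nmarking K h N M" "is_Nmarking K h N (fire e M)" "CN K h N (fire e M) = PtC K h N"
    and "K_decomp K h N (fire e M) \<pi>"
  shows "N_decomp K h N M (e # \<pi>)"
proof -
  obtain \<pi>0 segs where "\<pi> = \<pi>0 @ concat_pairs segs" "form0 K h N (fire e M) \<pi>0"
      "form_star K h N (end_marking (fire e M) \<pi>0) segs"
    using assms(8) by (auto simp: K_decomp_def)
  then show ?thesis
    using assms(1-7) unfolding N_decomp_def N_tail_def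
    by (intro exI[of _ "[e]"] exI[of _ \<pi>0] exI[of _ segs]) auto
qed

section \<open>Phases of a non-interfering substitution\<close>

locale noninterfering_subst =
  fixes K N :: "('a,'s) enet" and h :: "('a,'s) event" and \<sigma>0 :: "'s set"
  assumes K_context: "is_context K h" and wf_N: "wf_enet N"
    and events_disjoint: "events_disjoint K h N"
    and non_interfering: "non_interfering K h N \<sigma>0"
begin

abbreviation "hpre \<equiv> ctl (pre h)"
abbreviation "hpost \<equiv> ctl (post h)"
abbreviation "Nctl C \<equiv> glueR (P_rel K h N) (Tag2 ` C)"
abbreviation "Kctl D \<equiv> glueL (P_rel K h N) (Tag1 ` D)"
abbreviation "EvKN \<equiv> Ev (subst K h N)"
abbreviation "Minit \<equiv> mk (Ini (subst K h N)) \<sigma>0"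

lemma hpre_ne: "hpre \<noteq> {}" and hpost_ne: "hpost \<noteq> {}"
  and hpre_hpost_disjoint: "hpre \<inter> hpost = {}"
  using K_context by (auto simp: is_context_def)

lemma hpre_Ter_K_disjoint: "hpre \<inter> Ter K = {}"
  using K_context by (auto simp: is_context_def wf_enet_def)

lemma Ini_N_ne: "Ini N \<noteq> {}" and Ter_N_ne: "Ter N \<noteq> {}"
  and Ini_Ter_N_disjoint: "Ini N \<inter> Ter N = {}"
  using wf_N by (auto simp: wf_enet_def)

lemma N_pre_ne: "e \<in> Ev N \<Longrightarrow> ctl (pre e) \<noteq> {}"
  and N_pre_Ter_disjoint: "e \<in> Ev N \<Longrightarrow> ctl (pre e) \<inter> Ter N = {}"
  using wf_N by (auto simp: wf_enet_def)

lemma ctrl_reach_N_Ini_Ter: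
  "C \<in> ctrl_reach N \<Longrightarrow> (C \<subseteq> Ini N \<or> Ini N \<subseteq> C \<longrightarrow> C = Ini N) \<and> (C \<subseteq> Ter N \<or> Ter N \<subseteq> C \<longrightarrow> C = Ter N)"
  using wf_N unfolding wf_enet_def by blast

lemma ctrl_reach_N_origin:
  "C \<in> ctrl_reach N \<Longrightarrow> c \<in> C \<Longrightarrow> c \<in> Ini N \<or> (\<exists>e\<in>Ev N. c \<in> ctl (post e))"
  by (induct arbitrary: c rule: ctrl_reach.induct) (auto simp: ctrl_fire_def)

lemmas glued_simps = glueR_Glue_iff glueR_Tag2_iff[OF hpre_ne hpost_ne] glueL_Glue_iff
  glueL_Tag1_iff[OF Ini_N_ne Ter_N_ne] is_Ncond_Glue_iff is_Ncond_Tag2_iff not_is_Ncond_Tag1 CN_iff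

lemma is_Ncond_split:
  assumes "\<And>a i. Q (Glue (Tag1 a) (Tag2 i))" "\<And>c. Q (Tag2 c)" "\<And>x. \<not> is_Ncond K h N x \<Longrightarrow> Q x"
  shows "Q x"
  using assms is_Ncond_cases by metis

lemma Kctl_is_Ncond: "D \<subseteq> hpre \<union> hpost \<Longrightarrow> x \<in> Kctl D \<Longrightarrow> is_Ncond K h N x"
  using glueL_cases[of x K h N D] by (auto simp: glued_simps)

lemma Nctl_is_Ncond: "x \<in> Nctl C \<Longrightarrow> is_Ncond K h N x"
  using glueR_cases[of x K h N C] by (auto simp: glued_simps)

lemma Kctl_is_Ncond_imp_P: "x \<in> Kctl D \<Longrightarrow> is_Ncond K h N x \<Longrightarrow> x \<in> PiC K h N \<union> PtC K h N"
  using glueL_cases[of x K h N D] by (auto simp: glued_simps PiC_iff PtC_iff)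

lemma Kctl_hpre: "Kctl hpre = PiC K h N"
  by (rule set_eqI, rule is_Ncond_split)
    (use hpre_hpost_disjoint Ini_Ter_N_disjoint Kctl_is_Ncond[of hpre] in \<open>auto simp: glued_simps PiC_iff\<close>)

lemma Kctl_hpost: "Kctl hpost = PtC K h N"
  by (rule set_eqI, rule is_Ncond_split)
    (use hpre_hpost_disjoint Ini_Ter_N_disjoint Kctl_is_Ncond[of hpost] in \<open>auto simp: glued_simps PtC_iff\<close>)

lemma Nctl_Ini: "Nctl (Ini N) = PiC K h N"
  by (rule set_eqI, rule is_Ncond_split)
    (use Ini_Ter_N_disjoint Nctl_is_Ncond in \<open>auto simp: glued_simps PiC_iff\<close>)

lemma Nctl_Ter: "Nctl (Ter N) = PtC K h N"
  by (rule set_eqI, rule is_Ncond_split)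
    (use Ini_Ter_N_disjoint Nctl_is_Ncond in \<open>auto simp: glued_simps PtC_iff\<close>)

text \<open>Every control condition of N is represented by one glued N-condition; this makes
  \<open>Nctl\<close> injective and lets firing in K[N] be read back as firing in N.\<close>
lemma Nctl_representative: "\<exists>w. is_Ncond K h N w \<and> (\<forall>C. w \<in> Nctl C \<longleftrightarrow> c \<in> C)"
proof -
  obtain a x where "a \<in> hpre" "x \<in> hpost"
    using hpre_ne hpost_ne by auto
  then show ?thesis
    by (cases "c \<in> Ini N"; cases "c \<in> Ter N")
      (force simp: glued_simps intro: exI[of _ "Glue (Tag1 a) (Tag2 c)"] exI[of _ "Glue (Tag1 x) (Tag2 c)"]
         exI[of _ "Tag2 c"])+
qed

lemma is_Kmarking_if_CN_Kctl:
  assumes "CN K h N M = Kctl D"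
  shows "is_Kmarking K h N M"
proof -
  have "c \<in> Ini N \<union> Ter N" if "Tag2 c \<in> ctl M" for c
    using assms that Tag2_notin_glueL by (metis CN_iff Un_iff is_Ncond_Tag2_iff)
  then show ?thesis
    using assms unfolding is_Kmarking_def by (auto simp: glued_simps is_Ninternal_cond_def)
qed

lemma is_Nmarking_if_CN_Nctl: "CN K h N M = Nctl C \<Longrightarrow> is_Nmarking K h N M"
  unfolding is_Nmarking_def by (auto simp: glued_simps)

lemma CN_init: "CN K h N Minit = Kctl (Ini K \<inter> (hpre \<union> hpost))"
  unfolding CN_def
  by (rule set_eqI, rule is_Ncond_split)
    (use Kctl_is_Ncond[of "Ini K \<inter> (hpre \<union> hpost)"] in \<open>auto simp: glued_simps subst_def\<close>)

lemma Ev_subst_cases: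
  "e \<in> EvKN \<Longrightarrow> (\<exists>e0\<in>Ev K - {h}. e = Kev_of K h N e0) \<or> (\<exists>e0\<in>Ev N. e = Nev_of K h N e0)"
  by (auto simp: subst_def)

lemma CN_fire_Kev:
  assumes "D \<subseteq> hpre \<union> hpost" "CN K h N M = Kctl D"
  shows "CN K h N (fire (Kev_of K h N e) M) = Kctl ((D - ctl (pre e)) \<union> (ctl (post e) \<inter> (hpre \<union> hpost)))"
    (is "_ = Kctl ?D'")
proof (rule set_eqI)
  fix x
  have D': "?D' \<subseteq> hpre \<union> hpost"
    using assms(1) by auto
  show "x \<in> CN K h N (fire (Kev_of K h N e) M) \<longleftrightarrow> x \<in> Kctl ?D'"
    unfolding CN_fire assms(2)
    by (rule is_Ncond_split[of _ x])
      (use assms(1) Kctl_is_Ncond[OF assms(1)] Kctl_is_Ncond[OF D'] in \<open>auto simp: glued_simps\<close>)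
qed

lemma CN_fire_Kev_untouching:
  assumes "\<not> touches (Kev_of K h N e) (PiC K h N \<union> PtC K h N)"
  shows "CN K h N (fire (Kev_of K h N e) M) = CN K h N M"
proof -
  have "\<not> is_Ncond K h N x" if "x \<in> Kctl (ctl (pre e)) \<union> Kctl (ctl (post e))" for x
    using assms that Kctl_is_Ncond_imp_P unfolding touches_def by fastforce
  then show ?thesis
    unfolding CN_fire by (auto simp: CN_iff)
qed

lemma CN_fire_Nev:
  assumes CN: "CN K h N M = Nctl C" and con: "concession (Nev_of K h N e) M"
  shows "ctrl_fire C e ((C - ctl (pre e)) \<union> ctl (post e))"
    and "CN K h N (fire (Nev_of K h N e) M) = Nctl ((C - ctl (pre e)) \<union> ctl (post e))"
proof -
  have sub: "Nctl (ctl (pre e)) \<subseteq> ctl M" and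
    dis: "(ctl M - Nctl (ctl (pre e))) \<inter> Nctl (ctl (post e)) = {}"
    using concession_ctl[OF con] by simp_all
  have "ctl (pre e) \<subseteq> C"
  proof
    fix c assume c: "c \<in> ctl (pre e)"
    obtain w where w: "is_Ncond K h N w" "\<And>C. w \<in> Nctl C \<longleftrightarrow> c \<in> C"
      using Nctl_representative by blast
    then show "c \<in> C"
      using sub c CN by (metis CN_iff subsetD)
  qed
  moreover have "(C - ctl (pre e)) \<inter> ctl (post e) = {}"
  proof (rule ccontr)
    assume "(C - ctl (pre e)) \<inter> ctl (post e) \<noteq> {}"
    then obtain c where c: "c \<in> C" "c \<notin> ctl (pre e)" "c \<in> ctl (post e)"
      by auto
    obtain w where w: "is_Ncond K h N w" "\<And>C. w \<in> Nctl C \<longleftrightarrow> c \<in> C"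
      using Nctl_representative by blast
    have "w \<in> ctl M"
      using CN w c by (metis CN_iff)
    then show False
      using dis w c by auto
  qed
  ultimately show "ctrl_fire C e ((C - ctl (pre e)) \<union> ctl (post e))"
    by (simp add: ctrl_fire_def)
  show "CN K h N (fire (Nev_of K h N e) M) = Nctl ((C - ctl (pre e)) \<union> ctl (post e))"
    unfolding CN_fire CN
    by (rule set_eqI, rule is_Ncond_split) (use Nctl_is_Ncond in \<open>auto simp: glued_simps\<close>)
qed

lemma N_not_active_if_touched:
  assumes "reachable EvKN Minit M" "is_Kevent K h N e" "concession e M"
    and "touches e (PiC K h N \<union> PtC K h N)"
  shows "\<not> N_active K h N M"
  using non_interfering assms unfolding non_interfering_def by blast

lemma PtC_unmarked_if_PiC_marked:
  "reachable EvKN Minit M \<Longrightarrow> PiC K h N \<subseteq> ctl M \<Longrightarrow> PtC K h N \<inter> ctl M = {}"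
  using non_interfering unfolding non_interfering_def by blast

lemma CN_eq_PiC_if_Nev_enabled:
  assumes D: "D \<subseteq> hpre \<union> hpost" and CN: "CN K h N M = Kctl D"
    and e: "e \<in> Ev N" and con: "concession (Nev_of K h N e) M" and reach: "reachable EvKN Minit M"
  shows "CN K h N M = PiC K h N"
proof -
  have sub: "Nctl (ctl (pre e)) \<subseteq> ctl M"
    using concession_ctl(1)[OF con] by simp
  obtain c where c: "c \<in> ctl (pre e)"
    using N_pre_ne[OF e] by auto
  have "c \<notin> Ter N"
    using c N_pre_Ter_disjoint[OF e] by auto
  moreover have "Tag2 c \<notin> CN K h N M"
    using CN by simp
  ultimately have cI: "c \<in> Ini N"
    using subsetD[OF sub, of "Tag2 c"] c by (auto simp: glued_simps)
  have "hpre \<subseteq> D"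
  proof
    fix a assume "a \<in> hpre"
    then have "Glue (Tag1 a) (Tag2 c) \<in> CN K h N M"
      using sub c cI by (auto simp: glued_simps)
    then show "a \<in> D"
      using CN by (simp add: glued_simps)
  qed
  have "PiC K h N \<subseteq> Kctl D"
    using \<open>hpre \<subseteq> D\<close> by (fastforce simp: PiC_iff glued_simps)
  then have "PiC K h N \<subseteq> ctl M"
    using CN unfolding CN_def by blast
  then have PtC: "PtC K h N \<inter> ctl M = {}"
    using PtC_unmarked_if_PiC_marked reach by blast
  have "D \<inter> hpost = {}"
  proof (rule ccontr)
    assume "D \<inter> hpost \<noteq> {}"
    then obtain x t where "x \<in> D" "x \<in> hpost" "t \<in> Ter N"
      using Ter_N_ne by auto
    then have "Glue (Tag1 x) (Tag2 t) \<in> CN K h N M \<inter> PtC K h N"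
      using CN by (auto simp: glued_simps PtC_iff)
    then show False
      using PtC by (auto simp: CN_iff)
  qed
  with D \<open>hpre \<subseteq> D\<close> have "D = hpre"
    by auto
  then show ?thesis
    using CN Kctl_hpre by simp
qed

lemma Nctl_final_eq_Ter:
  assumes "ctl M = Kctl (Ter K)" "CN K h N M = Nctl C" "C \<in> ctrl_reach N"
  shows "C = Ter N"
proof -
  have "c \<in> Ter N" if c: "c \<in> C" for c
  proof (rule ccontr)
    assume "c \<notin> Ter N"
    show False
    proof (cases "c \<in> Ini N")
      case True
      obtain a where "a \<in> hpre"
        using hpre_ne by auto
      then have "Glue (Tag1 a) (Tag2 c) \<in> Kctl (Ter K)"
        using assms(1,2) c True by (metis CN_iff glueR_Glue_iff)
      then show False
        using \<open>a \<in> hpre\<close> hpre_Ter_K_disjoint by (auto simp: glued_simps)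
    next
      case False
      then have "Tag2 c \<in> CN K h N M"
        using assms(2) c \<open>c \<notin> Ter N\<close> by (simp add: glued_simps)
      then show False
        using assms(1) by (simp add: CN_iff)
    qed
  qed
  then show ?thesis
    using ctrl_reach_N_Ini_Ter[OF assms(3)] by blast
qed

lemma inactive_N_straddles:
  assumes CN: "CN K h N M = Nctl C" and C: "C \<in> ctrl_reach N" "C \<noteq> Ter N"
    and inactive: "\<not> N_active K h N M"
  shows "C \<inter> Ini N \<noteq> {} \<and> \<not> Ini N \<subseteq> C" "C \<inter> Ter N \<noteq> {} \<and> \<not> Ter N \<subseteq> C"
proof -
  have "C \<subseteq> Ini N \<union> Ter N"
  proof
    fix c assume "c \<in> C"
    show "c \<in> Ini N \<union> Ter N"
    proof (rule ccontr)
      assume c: "c \<notin> Ini N \<union> Ter N"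
      then obtain e where "e \<in> Ev N" "c \<in> ctl (post e)"
        using ctrl_reach_N_origin[OF C(1) \<open>c \<in> C\<close>] by auto
      moreover have "Tag2 c \<in> ctl M"
        using CN \<open>c \<in> C\<close> c by (metis CN_iff Un_iff glueR_Tag2_iff[OF hpre_ne hpost_ne])
      ultimately have "N_active K h N M"
        using c unfolding N_active_def internal_to_N_def by blast
      then show False
        using inactive by simp
    qed
  qed
  moreover have "\<not> Ini N \<subseteq> C"
  proof
    assume "Ini N \<subseteq> C"
    then have "PiC K h N \<subseteq> CN K h N M"
      unfolding CN by (fastforce simp: PiC_iff glued_simps)
    then show False
      using inactive by (auto simp: N_active_def CN_def)
  qed
  moreover have "\<not> C \<subseteq> Ini N" "\<not> C \<subseteq> Ter N" "\<not> Ter N \<subseteq> C"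
    using ctrl_reach_N_Ini_Ter[OF C(1)] C(2) \<open>\<not> Ini N \<subseteq> C\<close> by auto
  ultimately show "C \<inter> Ini N \<noteq> {} \<and> \<not> Ini N \<subseteq> C" "C \<inter> Ter N \<noteq> {} \<and> \<not> Ter N \<subseteq> C"
    by auto
qed

text \<open>If a is a precondition the event consumes all these glued conditions, so all are marked;
  otherwise it produces them all, so none may be marked.\<close>
lemma Kev_glued_all_or_none:
  assumes con: "concession (Kev_of K h N e) M" and a: "a \<in> ctl (pre e) \<union> ctl (post e)"
    and J: "\<forall>j\<in>J. a \<in> hpre \<and> j \<in> Ini N \<or> a \<in> hpost \<and> j \<in> Ter N"
  shows "J \<subseteq> {j. Glue (Tag1 a) (Tag2 j) \<in> ctl M} \<or> J \<inter> {j. Glue (Tag1 a) (Tag2 j) \<in> ctl M} = {}"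
proof (cases "a \<in> ctl (pre e)")
  case True
  have "Glue (Tag1 a) (Tag2 j) \<in> ctl M" if "j \<in> J" for j
    using subsetD[OF concession_ctl(1)[OF con], of "Glue (Tag1 a) (Tag2 j)"] True J that
    by (auto simp: glued_simps)
  then show ?thesis
    by blast
next
  case False
  then show ?thesis
    using concession_ctl(2)[OF con] a J by (auto simp: glued_simps)
qed

lemma Glue_marked_iff_Nctl:
  assumes "CN K h N M = Nctl C" "a \<in> hpre \<and> j \<in> Ini N \<or> a \<in> hpost \<and> j \<in> Ter N"
  shows "Glue (Tag1 a) (Tag2 j) \<in> ctl M \<longleftrightarrow> j \<in> C"
  using assms by (metis CN_iff glueR_Glue_iff is_Ncond_Glue_iff)

lemma Kev_untouching_in_N_phase:
  assumes CN: "CN K h N M = Nctl C" and C: "C \<in> ctrl_reach N" "C \<noteq> Ter N"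
    and reach: "reachable EvKN Minit M" and e: "e \<in> Ev K - {h}"
    and con: "concession (Kev_of K h N e) M"
  shows "\<not> touches (Kev_of K h N e) (PiC K h N \<union> PtC K h N)"
proof
  assume touch: "touches (Kev_of K h N e) (PiC K h N \<union> PtC K h N)"
  have "is_Kevent K h N (Kev_of K h N e)"
    using e by (simp add: is_Kevent_def)
  then have straddle: "C \<inter> Ini N \<noteq> {} \<and> \<not> Ini N \<subseteq> C" "C \<inter> Ter N \<noteq> {} \<and> \<not> Ter N \<subseteq> C"
    using inactive_N_straddles[OF CN C] N_not_active_if_touched[OF reach _ con touch] by auto
  from touch obtain y where "y \<in> Kctl (ctl (pre e)) \<union> Kctl (ctl (post e))"
    and "y \<in> PiC K h N \<union> PtC K h N"
    unfolding touches_def by auto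
  then obtain a j where a: "a \<in> ctl (pre e) \<union> ctl (post e)"
    and aj: "a \<in> hpre \<and> j \<in> Ini N \<or> a \<in> hpost \<and> j \<in> Ter N"
    by (fastforce simp: PiC_iff PtC_iff glued_simps)
  show False
  proof (cases "a \<in> hpre")
    case True
    then have "Ini N \<subseteq> C \<or> Ini N \<inter> C = {}"
      using Kev_glued_all_or_none[OF con a, of "Ini N"] Glue_marked_iff_Nctl[OF CN] by auto
    then show False
      using straddle(1) by blast
  next
    case False
    with aj have "a \<in> hpost"
      by auto
    then have "Ter N \<subseteq> C \<or> Ter N \<inter> C = {}"
      using Kev_glued_all_or_none[OF con a, of "Ter N"] Glue_marked_iff_Nctl[OF CN] by auto
    then show False
      using straddle(2) by blast
  qed
qed

definition K_phase :: "('a,'s) marking \<Rightarrow> bool" where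
  "K_phase M \<longleftrightarrow> (\<exists>D \<subseteq> hpre \<union> hpost. CN K h N M = Kctl D)"

definition N_phase :: "'a ctrl set \<Rightarrow> ('a,'s) marking \<Rightarrow> bool" where
  "N_phase C M \<longleftrightarrow> C \<in> ctrl_reach N \<and> C \<noteq> Ter N \<and> CN K h N M = Nctl C"

lemma K_phase_init: "K_phase Minit"
  unfolding K_phase_def using CN_init by (intro exI[of _ "Ini K \<inter> (hpre \<union> hpost)"]) auto

lemma Nevent_not_Kevent: "is_Nevent K h N e \<Longrightarrow> \<not> is_Kevent K h N e"
  using events_disjoint unfolding events_disjoint_def by blast

lemma K_phase_step:
  assumes "K_phase M" "reachable EvKN Minit M" "e \<in> EvKN" "concession e M"
  shows "is_Kevent K h N e \<and> K_phase (fire e M)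
    \<or> is_Nevent K h N e \<and> N_phase (Ini N) M \<and> CN K h N M = PiC K h N"
proof -
  obtain D where D: "D \<subseteq> hpre \<union> hpost" "CN K h N M = Kctl D"
    using assms(1) by (auto simp: K_phase_def)
  from Ev_subst_cases[OF assms(3)] show ?thesis
  proof
    assume "\<exists>e0\<in>Ev K - {h}. e = Kev_of K h N e0"
    then obtain e0 where "e0 \<in> Ev K - {h}" "e = Kev_of K h N e0"
      by blast
    moreover have "K_phase (fire (Kev_of K h N e0) M)"
      using CN_fire_Kev[OF D, of e0] D(1) unfolding K_phase_def
      by (intro exI[of _ "(D - ctl (pre e0)) \<union> (ctl (post e0) \<inter> (hpre \<union> hpost))"]) auto
    ultimately show ?thesis
      by (auto simp: is_Kevent_def)
  next
    assume "\<exists>e0\<in>Ev N. e = Nev_of K h N e0"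
    then obtain e0 where "e0 \<in> Ev N" "e = Nev_of K h N e0"
      by blast
    moreover from this have "CN K h N M = PiC K h N"
      using CN_eq_PiC_if_Nev_enabled[OF D] assms(2,4) by blast
    moreover have "Ini N \<noteq> Ter N"
      using Ini_N_ne Ini_Ter_N_disjoint by auto
    ultimately show ?thesis
      by (auto simp: is_Nevent_def N_phase_def Nctl_Ini intro: ctrl_reach.init)
  qed
qed

lemma N_phase_step:
  assumes "N_phase C M" "reachable EvKN Minit M" "e \<in> EvKN" "concession e M"
  shows "is_Kevent K h N e \<longrightarrow> \<not> touches e (PiC K h N \<union> PtC K h N)"
    and "(\<exists>C'. N_phase C' (fire e M))
      \<or> is_Nevent K h N e \<and> K_phase (fire e M) \<and> CN K h N (fire e M) = PtC K h N"
proof -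
  have C: "C \<in> ctrl_reach N" "C \<noteq> Ter N" and CN: "CN K h N M = Nctl C"
    using assms(1) by (auto simp: N_phase_def)
  have "(is_Kevent K h N e \<longrightarrow> \<not> touches e (PiC K h N \<union> PtC K h N))
    \<and> ((\<exists>C'. N_phase C' (fire e M))
      \<or> is_Nevent K h N e \<and> K_phase (fire e M) \<and> CN K h N (fire e M) = PtC K h N)"
    using Ev_subst_cases[OF assms(3)]
  proof
    assume "\<exists>e0\<in>Ev K - {h}. e = Kev_of K h N e0"
    then obtain e0 where e0: "e0 \<in> Ev K - {h}" "e = Kev_of K h N e0"
      by blast
    then have "\<not> touches e (PiC K h N \<union> PtC K h N)"
      using Kev_untouching_in_N_phase[OF CN C assms(2)] assms(4) by blast
    moreover from this have "N_phase C (fire e M)"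
      using assms(1) e0(2) CN_fire_Kev_untouching by (simp add: N_phase_def)
    ultimately show ?thesis
      by blast
  next
    assume "\<exists>e0\<in>Ev N. e = Nev_of K h N e0"
    then obtain e0 where e0: "e0 \<in> Ev N" "e = Nev_of K h N e0"
      by blast
    define C' where "C' = (C - ctl (pre e0)) \<union> ctl (post e0)"
    have "C' \<in> ctrl_reach N" and CN': "CN K h N (fire e M) = Nctl C'"
      using CN_fire_Nev[OF CN, of e0] ctrl_reach.step[OF C(1) e0(1)] assms(4) e0(2)
      by (simp_all add: C'_def)
    moreover have "is_Nevent K h N e"
      using e0 by (auto simp: is_Nevent_def)
    moreover from this have "\<not> is_Kevent K h N e"
      by (rule Nevent_not_Kevent)
    moreover have "K_phase (fire e M)" if "C' = Ter N"
      using CN' that Nctl_Ter Kctl_hpost unfolding K_phase_def by blast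
    ultimately show ?thesis
      using Nctl_Ter unfolding N_phase_def by blast
  qed
  then show "is_Kevent K h N e \<longrightarrow> \<not> touches e (PiC K h N \<union> PtC K h N)"
    and "(\<exists>C'. N_phase C' (fire e M))
      \<or> is_Nevent K h N e \<and> K_phase (fire e M) \<and> CN K h N (fire e M) = PtC K h N"
    by blast+
qed

lemma is_Nmarking_if_N_phase: "N_phase C M \<Longrightarrow> is_Nmarking K h N M"
  using is_Nmarking_if_CN_Nctl by (auto simp: N_phase_def)

lemma is_Kmarking_if_K_phase: "K_phase M \<Longrightarrow> is_Kmarking K h N M"
  using is_Kmarking_if_CN_Kctl by (auto simp: K_phase_def)

text \<open>Reachability of M is carried along only to apply the non-interference conditions.\<close>
lemma decomp_by_phase:
  assumes "valid_seq EvKN M \<pi>" "reachable EvKN Minit M" "ctl (end_marking M \<pi>) = Kctl (Ter K)"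
  shows "(K_phase M \<longrightarrow> K_decomp K h N M \<pi>) \<and> (\<forall>C. N_phase C M \<longrightarrow> N_decomp K h N M \<pi>)"
  using assms
proof (induct \<pi> arbitrary: M)
  case Nil
  have "\<not> N_phase C M" for C
    using Nctl_final_eq_Ter Nil.prems(3) by (auto simp: N_phase_def)
  then show ?case
    using K_decomp_Nil is_Kmarking_if_K_phase by blast
next
  case (Cons e \<pi>)
  have e: "e \<in> EvKN" "concession e M"
    using Cons.prems(1) by auto
  have IH: "(K_phase (fire e M) \<longrightarrow> K_decomp K h N (fire e M) \<pi>)
      \<and> (\<forall>C. N_phase C (fire e M) \<longrightarrow> N_decomp K h N (fire e M) \<pi>)"
    using Cons reachable_fire[OF Cons.prems(2) e] by auto
  have N_case: "N_decomp K h N M (e # \<pi>)" if "N_phase C M" for C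
  proof -
    note step = N_phase_step[OF that Cons.prems(2) e]
    have Nm: "is_Nmarking K h N M"
      using that by (rule is_Nmarking_if_N_phase)
    from step(2) show ?thesis
    proof
      assume "\<exists>C'. N_phase C' (fire e M)"
      then show ?thesis
        using N_decomp_Cons[OF e Nm step(1)] IH by blast
    next
      assume last: "is_Nevent K h N e \<and> K_phase (fire e M) \<and> CN K h N (fire e M) = PtC K h N"
      then have "\<not> is_Kevent K h N e"
        using Nevent_not_Kevent by blast
      moreover have "is_Nmarking K h N (fire e M)"
        using last Nctl_Ter is_Nmarking_if_CN_Nctl by metis
      ultimately show ?thesis
        using N_decomp_Cons_last[OF e _ _ Nm] last IH by blast
    qed
  qed
  moreover have "K_decomp K h N M (e # \<pi>)" if "K_phase M"
    using K_phase_step[OF that Cons.prems(2) e]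
  proof
    assume "is_Kevent K h N e \<and> K_phase (fire e M)"
    then show ?thesis
      using K_decomp_Cons[OF e _ is_Kmarking_if_K_phase[OF that]] IH by blast
  next
    assume "is_Nevent K h N e \<and> N_phase (Ini N) M \<and> CN K h N M = PiC K h N"
    then show ?thesis
      using K_decomp_if_N_decomp[OF is_Kmarking_if_K_phase[OF that], of "e # \<pi>"] N_case by auto
  qed
  ultimately show ?case
    by blast
qed

end

theorem lemmaA8:
  fixes K N :: "('a,'s) enet" and h :: "('a,'s) event" and \<sigma>0 \<sigma>' :: "'s set"
    and \<pi> :: "('a,'s) event list"
  assumes "is_context K h"
    and "wf_enet N"
    and "events_disjoint K h N"
    and "non_interfering K h N \<sigma>0"
    and "valid_seq (Ev (subst K h N)) (mk (Ini (subst K h N)) \<sigma>0) \<pi>"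
    and "end_marking (mk (Ini (subst K h N)) \<sigma>0) \<pi> = mk (Ter (subst K h N)) \<sigma>'"
  shows "\<exists>\<pi>0 segs. \<pi> = \<pi>0 @ concat (map (\<lambda>(a, b). a @ b) segs)
           \<and> form0 K h N (mk (Ini (subst K h N)) \<sigma>0) \<pi>0
           \<and> form_star K h N (end_marking (mk (Ini (subst K h N)) \<sigma>0) \<pi>0) segs"
proof -
  interpret noninterfering_subst K N h \<sigma>0
    using assms(1-4) by unfold_locales
  have "ctl (end_marking Minit \<pi>) = Kctl (Ter K)"
    using assms(6) by (simp add: subst_def)
  then have "K_decomp K h N Minit \<pi>"
    using decomp_by_phase[OF assms(5) reachable_refl] K_phase_init by blast
  then show ?thesis
    unfolding K_decomp_def .
qed

end
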